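(* (Provably in $\mathsf{Z}^-_{\mathrm{FTM}\omega}$.) Let $F$ be a class-function whose domain $D=\mathrm{dom}F$ is a set, and let $R=F[D]=\{F(x):x\in D\}$. Then $F$ and $R$ are sets in each of the following two cases: (1) $R$ is transitive; (2) there is a set $Y$ such that every element of $R$ is a subset of $Y$.
   Context: $\mathsf{Z}^-_{\mathrm{FTM}\omega}$ is Zermelo set theory without Power Set and Choice (Extensionality, Pairing, Union, Infinity, Regularity, Separation) plus: (FC) every set $X$ has a superset $Y$ such that every finite $x\subseteq Y$ belongs to $Y$; (TS) every set has a transitive superset; (MC) every set binary relation $A$ that is well-founded and extensional admits a transitive set $X$ and a bijection $\eta$ from its field onto $X$ with $jAk\iff\eta(j)\in\eta(k)$; (Count) every set admits an injection into $\omega$. A class-function is a class definable by an $\in$-formula (parameters allowed) that consists of ordered pairs and is functional. *)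

theory Defs
  imports Main
begin

section \<open>First-order language of set theory (deep embedding, de Bruijn indices)\<close>

datatype fm = Mem nat nat | Eq nat nat | Neg fm | Conj fm fm | Ex fm

text \<open>A structure is a type 'm (the universe) with a binary relation E (membership).
  Variable i is interpreted by env i; Ex binds variable 0 and shifts the others.\<close>

fun sat :: "('m \<Rightarrow> 'm \<Rightarrow> bool) \<Rightarrow> (nat \<Rightarrow> 'm) \<Rightarrow> fm \<Rightarrow> bool" where
  "sat E env (Mem i j) = E (env i) (env j)"
| "sat E env (Eq i j) = (env i = env j)"
| "sat E env (Neg p) = (\<not> sat E env p)"
| "sat E env (Conj p q) = (sat E env p \<and> sat E env q)"
| "sat E env (Ex p) = (\<exists>a. sat E (case_nat a env) p)"

section \<open>Internal (first-order definable) notions in a structure (UNIV::'m, E)\<close>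

definition isubset :: "('m \<Rightarrow> 'm \<Rightarrow> bool) \<Rightarrow> 'm \<Rightarrow> 'm \<Rightarrow> bool" where
  "isubset E x y \<longleftrightarrow> (\<forall>z. E z x \<longrightarrow> E z y)"

definition itrans :: "('m \<Rightarrow> 'm \<Rightarrow> bool) \<Rightarrow> 'm \<Rightarrow> bool" where
  "itrans E t \<longleftrightarrow> (\<forall>y z. E z y \<and> E y t \<longrightarrow> E z t)"

definition iupair :: "('m \<Rightarrow> 'm \<Rightarrow> bool) \<Rightarrow> 'm \<Rightarrow> 'm \<Rightarrow> 'm \<Rightarrow> bool" where
  "iupair E u a b \<longleftrightarrow> (\<forall>w. E w u \<longleftrightarrow> w = a \<or> w = b)"

definition iopair :: "('m \<Rightarrow> 'm \<Rightarrow> bool) \<Rightarrow> 'm \<Rightarrow> 'm \<Rightarrow> 'm \<Rightarrow> bool" where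
  "iopair E p a b \<longleftrightarrow> (\<forall>z. E z p \<longleftrightarrow> iupair E z a a \<or> iupair E z a b)"

definition iempty :: "('m \<Rightarrow> 'm \<Rightarrow> bool) \<Rightarrow> 'm \<Rightarrow> bool" where
  "iempty E e \<longleftrightarrow> (\<forall>z. \<not> E z e)"

definition isucc :: "('m \<Rightarrow> 'm \<Rightarrow> bool) \<Rightarrow> 'm \<Rightarrow> 'm \<Rightarrow> bool" where
  "isucc E s x \<longleftrightarrow> (\<forall>z. E z s \<longleftrightarrow> E z x \<or> z = x)"

definition iinductive :: "('m \<Rightarrow> 'm \<Rightarrow> bool) \<Rightarrow> 'm \<Rightarrow> bool" where
  "iinductive E I \<longleftrightarrow> (\<exists>e. iempty E e \<and> E e I) \<and> (\<forall>x. E x I \<longrightarrow> (\<exists>s. isucc E s x \<and> E s I))"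

definition inat :: "('m \<Rightarrow> 'm \<Rightarrow> bool) \<Rightarrow> 'm \<Rightarrow> bool" where
  "inat E n \<longleftrightarrow> (\<forall>I. iinductive E I \<longrightarrow> E n I)"

definition inrel :: "('m \<Rightarrow> 'm \<Rightarrow> bool) \<Rightarrow> 'm \<Rightarrow> 'm \<Rightarrow> 'm \<Rightarrow> bool" where
  "inrel E A a b \<longleftrightarrow> (\<exists>p. E p A \<and> iopair E p a b)"

definition irel :: "('m \<Rightarrow> 'm \<Rightarrow> bool) \<Rightarrow> 'm \<Rightarrow> bool" where
  "irel E A \<longleftrightarrow> (\<forall>p. E p A \<longrightarrow> (\<exists>a b. iopair E p a b))"

definition ifun :: "('m \<Rightarrow> 'm \<Rightarrow> bool) \<Rightarrow> 'm \<Rightarrow> bool" where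
  "ifun E f \<longleftrightarrow> irel E f \<and> (\<forall>a b c. inrel E f a b \<and> inrel E f a c \<longrightarrow> b = c)"

definition idom :: "('m \<Rightarrow> 'm \<Rightarrow> bool) \<Rightarrow> 'm \<Rightarrow> 'm \<Rightarrow> bool" where
  "idom E f d \<longleftrightarrow> (\<forall>a. E a d \<longleftrightarrow> (\<exists>b. inrel E f a b))"

definition iran :: "('m \<Rightarrow> 'm \<Rightarrow> bool) \<Rightarrow> 'm \<Rightarrow> 'm \<Rightarrow> bool" where
  "iran E f r \<longleftrightarrow> (\<forall>b. E b r \<longleftrightarrow> (\<exists>a. inrel E f a b))"

definition iinj :: "('m \<Rightarrow> 'm \<Rightarrow> bool) \<Rightarrow> 'm \<Rightarrow> bool" where
  "iinj E f \<longleftrightarrow> (\<forall>a a' b. inrel E f a b \<and> inrel E f a' b \<longrightarrow> a = a')"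

definition ibij :: "('m \<Rightarrow> 'm \<Rightarrow> bool) \<Rightarrow> 'm \<Rightarrow> 'm \<Rightarrow> 'm \<Rightarrow> bool" where
  "ibij E f X Y \<longleftrightarrow> ifun E f \<and> idom E f X \<and> iran E f Y \<and> iinj E f"

definition ifinite :: "('m \<Rightarrow> 'm \<Rightarrow> bool) \<Rightarrow> 'm \<Rightarrow> bool" where
  "ifinite E x \<longleftrightarrow> (\<exists>n f. inat E n \<and> ibij E f n x)"

definition ifld :: "('m \<Rightarrow> 'm \<Rightarrow> bool) \<Rightarrow> 'm \<Rightarrow> 'm \<Rightarrow> bool" where
  "ifld E A x \<longleftrightarrow> (\<exists>y. inrel E A x y \<or> inrel E A y x)"

definition iwf :: "('m \<Rightarrow> 'm \<Rightarrow> bool) \<Rightarrow> 'm \<Rightarrow> bool" where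
  "iwf E A \<longleftrightarrow> (\<forall>S. (\<exists>x. E x S) \<and> (\<forall>x. E x S \<longrightarrow> ifld E A x) \<longrightarrow>
      (\<exists>m. E m S \<and> \<not> (\<exists>i. E i S \<and> inrel E A i m)))"

definition iextensional :: "('m \<Rightarrow> 'm \<Rightarrow> bool) \<Rightarrow> 'm \<Rightarrow> bool" where
  "iextensional E A \<longleftrightarrow> (\<forall>j k. ifld E A j \<and> ifld E A k \<and> (\<forall>i. inrel E A i j \<longleftrightarrow> inrel E A i k) \<longrightarrow> j = k)"

section \<open>The axioms of Z^-_FTM\<omega>\<close>

definition ax_ext :: "('m \<Rightarrow> 'm \<Rightarrow> bool) \<Rightarrow> bool" where
  "ax_ext E \<longleftrightarrow> (\<forall>x y. (\<forall>z. E z x \<longleftrightarrow> E z y) \<longrightarrow> x = y)"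

definition ax_pair :: "('m \<Rightarrow> 'm \<Rightarrow> bool) \<Rightarrow> bool" where
  "ax_pair E \<longleftrightarrow> (\<forall>a b. \<exists>c. iupair E c a b)"

definition ax_union :: "('m \<Rightarrow> 'm \<Rightarrow> bool) \<Rightarrow> bool" where
  "ax_union E \<longleftrightarrow> (\<forall>a. \<exists>u. \<forall>z. E z u \<longleftrightarrow> (\<exists>y. E z y \<and> E y a))"

definition ax_inf :: "('m \<Rightarrow> 'm \<Rightarrow> bool) \<Rightarrow> bool" where
  "ax_inf E \<longleftrightarrow> (\<exists>I. iinductive E I)"

definition ax_reg :: "('m \<Rightarrow> 'm \<Rightarrow> bool) \<Rightarrow> bool" where
  "ax_reg E \<longleftrightarrow> (\<forall>x. (\<exists>y. E y x) \<longrightarrow> (\<exists>y. E y x \<and> \<not> (\<exists>z. E z y \<and> E z x)))"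

text \<open>Separation scheme, with arbitrary parameters (env); variable 0 is the separated variable\<close>
definition ax_sep :: "('m \<Rightarrow> 'm \<Rightarrow> bool) \<Rightarrow> bool" where
  "ax_sep E \<longleftrightarrow> (\<forall>\<phi> env a. \<exists>b. \<forall>z. E z b \<longleftrightarrow> E z a \<and> sat E (case_nat z env) \<phi>)"

definition ax_FC :: "('m \<Rightarrow> 'm \<Rightarrow> bool) \<Rightarrow> bool" where
  "ax_FC E \<longleftrightarrow> (\<forall>X. \<exists>Y. isubset E X Y \<and> (\<forall>x. isubset E x Y \<and> ifinite E x \<longrightarrow> E x Y))"

definition ax_TS :: "('m \<Rightarrow> 'm \<Rightarrow> bool) \<Rightarrow> bool" where
  "ax_TS E \<longleftrightarrow> (\<forall>x. \<exists>t. isubset E x t \<and> itrans E t)"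

definition ax_MC :: "('m \<Rightarrow> 'm \<Rightarrow> bool) \<Rightarrow> bool" where
  "ax_MC E \<longleftrightarrow> (\<forall>A. irel E A \<and> iwf E A \<and> iextensional E A \<longrightarrow>
      (\<exists>Fd X \<eta>. (\<forall>x. E x Fd \<longleftrightarrow> ifld E A x) \<and> itrans E X \<and> ibij E \<eta> Fd X \<and>
         (\<forall>j k a b. inrel E \<eta> j a \<and> inrel E \<eta> k b \<longrightarrow> (inrel E A j k \<longleftrightarrow> E a b))))"

definition ax_count :: "('m \<Rightarrow> 'm \<Rightarrow> bool) \<Rightarrow> bool" where
  "ax_count E \<longleftrightarrow> (\<forall>x. \<exists>f. ifun E f \<and> idom E f x \<and> iinj E f \<and> (\<forall>a b. inrel E f a b \<longrightarrow> inat E b))"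

definition ZFTM :: "('m \<Rightarrow> 'm \<Rightarrow> bool) \<Rightarrow> bool" where
  "ZFTM E \<longleftrightarrow> ax_ext E \<and> ax_pair E \<and> ax_union E \<and> ax_inf E \<and> ax_reg E \<and> ax_sep E
     \<and> ax_FC E \<and> ax_TS E \<and> ax_MC E \<and> ax_count E"

section \<open>Classes and class-functions\<close>

text \<open>The class defined by formula \<phi> (free variable 0) with parameters env\<close>
definition cls :: "('m \<Rightarrow> 'm \<Rightarrow> bool) \<Rightarrow> fm \<Rightarrow> (nat \<Rightarrow> 'm) \<Rightarrow> 'm \<Rightarrow> bool" where
  "cls E \<phi> env z \<longleftrightarrow> sat E (case_nat z env) \<phi>"

definition is_class_fun :: "('m \<Rightarrow> 'm \<Rightarrow> bool) \<Rightarrow> fm \<Rightarrow> (nat \<Rightarrow> 'm) \<Rightarrow> bool" where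
  "is_class_fun E \<phi> env \<longleftrightarrow>
     (\<forall>z. cls E \<phi> env z \<longrightarrow> (\<exists>a b. iopair E z a b)) \<and>
     (\<forall>p q a b c. cls E \<phi> env p \<and> cls E \<phi> env q \<and> iopair E p a b \<and> iopair E q a c \<longrightarrow> b = c)"

definition cf_app :: "('m \<Rightarrow> 'm \<Rightarrow> bool) \<Rightarrow> fm \<Rightarrow> (nat \<Rightarrow> 'm) \<Rightarrow> 'm \<Rightarrow> 'm \<Rightarrow> bool" where
  "cf_app E \<phi> env x y \<longleftrightarrow> (\<exists>p. iopair E p x y \<and> cls E \<phi> env p)"

definition cf_dom :: "('m \<Rightarrow> 'm \<Rightarrow> bool) \<Rightarrow> fm \<Rightarrow> (nat \<Rightarrow> 'm) \<Rightarrow> 'm \<Rightarrow> bool" where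
  "cf_dom E \<phi> env x \<longleftrightarrow> (\<exists>y. cf_app E \<phi> env x y)"

definition cf_ran :: "('m \<Rightarrow> 'm \<Rightarrow> bool) \<Rightarrow> fm \<Rightarrow> (nat \<Rightarrow> 'm) \<Rightarrow> 'm \<Rightarrow> bool" where
  "cf_ran E \<phi> env y \<longleftrightarrow> (\<exists>x. cf_app E \<phi> env x y)"

definition is_set :: "('m \<Rightarrow> 'm \<Rightarrow> bool) \<Rightarrow> ('m \<Rightarrow> bool) \<Rightarrow> bool" where
  "is_set E C \<longleftrightarrow> (\<exists>s. \<forall>z. E z s \<longleftrightarrow> C z)"

end

theory Submission
  imports Defs
begin

text \<open>Let \<open>T\<close> be empty in case (1) and, by (TS), a transitive superset of \<open>Y\<close> in case (2);
  then every element of a value of \<open>F\<close> lies in \<open>T\<close> or is itself a value. An injection of \<open>D\<close>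
  into \<open>\<omega>\<close> picks, for every value outside \<open>T\<close>, its preimage of least code; let \<open>D'\<close> be the
  set of these preimages. On \<open>S = T \<union> {(x, T) | x \<in> D'}\<close> the map \<open>g\<close> fixing \<open>T\<close> and sending
  \<open>(x, T)\<close> to \<open>F x\<close> is injective with transitive image, so \<open>u A v \<longleftrightarrow> g u \<in> g v\<close> is a
  well-founded extensional set relation on \<open>S\<close>. Its transitive collapse (MC) agrees with \<open>g\<close> by
  well-founded induction, hence the image of \<open>g\<close>, which contains the range \<open>R\<close>, is a set.
  Finally \<open>F \<subseteq> (D \<union> R)\<^sup>2\<close>, and ordered pairs of elements of a set lie in a set by (FC).\<close>

section \<open>Definable predicates\<close>

fun rename_fm :: "(nat \<Rightarrow> nat) \<Rightarrow> fm \<Rightarrow> fm" where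
  "rename_fm h (Mem i j) = Mem (h i) (h j)"
| "rename_fm h (Eq i j) = Eq (h i) (h j)"
| "rename_fm h (Neg p) = Neg (rename_fm h p)"
| "rename_fm h (Conj p q) = Conj (rename_fm h p) (rename_fm h q)"
| "rename_fm h (Ex p) = Ex (rename_fm (case_nat 0 (Suc \<circ> h)) p)"

lemma sat_rename_fm: "sat E env (rename_fm h p) = sat E (env \<circ> h) p"
proof (induction p arbitrary: env h)
  case (Ex p)
  have "case_nat a env \<circ> case_nat 0 (Suc \<circ> h) = case_nat a (env \<circ> h)" for a
    by (rule ext) (simp split: nat.split)
  then show ?case by (simp only: rename_fm.simps sat.simps Ex.IH)
qed auto

definition interleave :: "(nat \<Rightarrow> 'm) \<Rightarrow> (nat \<Rightarrow> 'm) \<Rightarrow> nat \<Rightarrow> 'm" where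
  "interleave e r n = (if even n then e (n div 2) else r (n div 2))"

definition interleave_map :: "(nat \<Rightarrow> nat) \<Rightarrow> (nat \<Rightarrow> nat) \<Rightarrow> nat \<Rightarrow> nat" where
  "interleave_map h k n = (if even n then 2 * h (n div 2) else Suc (2 * k (n div 2)))"

lemma interleave_comp_interleave_map:
  "interleave e r \<circ> interleave_map h k = interleave (e \<circ> h) (r \<circ> k)"
  by (rule ext) (simp add: interleave_def interleave_map_def)

text \<open>The even variables of the formula stand for the environment, the odd ones for fixed
  parameters.\<close>

definition definable :: "('m \<Rightarrow> 'm \<Rightarrow> bool) \<Rightarrow> ((nat \<Rightarrow> 'm) \<Rightarrow> bool) \<Rightarrow> bool" where
  "definable E P \<longleftrightarrow> (\<exists>\<psi> r. \<forall>e. sat E (interleave e r) \<psi> = P e)"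

lemma definable_reindex:
  assumes "definable E P"
  shows "definable E (\<lambda>e. P (e \<circ> h))"
proof -
  obtain \<psi> r where \<psi>: "\<And>e. sat E (interleave e r) \<psi> = P e"
    using assms unfolding definable_def by blast
  have "sat E (interleave e r) (rename_fm (interleave_map h id) \<psi>) = P (e \<circ> h)" for e
    by (simp add: sat_rename_fm interleave_comp_interleave_map \<psi>)
  then show ?thesis unfolding definable_def by blast
qed

lemma definable_mem_vv: "definable E (\<lambda>e. E (e i) (e j))"
  unfolding definable_def by (rule exI[of _ "Mem (2*i) (2*j)"]) (simp add: interleave_def)

lemma definable_mem_vc: "definable E (\<lambda>e. E (e i) c)"
  unfolding definable_def
  by (rule exI[of _ "Mem (2*i) 1"], rule exI[of _ "\<lambda>_. c"]) (simp add: interleave_def)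

lemma definable_mem_cv: "definable E (\<lambda>e. E c (e i))"
  unfolding definable_def
  by (rule exI[of _ "Mem 1 (2*i)"], rule exI[of _ "\<lambda>_. c"]) (simp add: interleave_def)

lemma definable_eq_vv: "definable E (\<lambda>e. e i = e j)"
  unfolding definable_def by (rule exI[of _ "Eq (2*i) (2*j)"]) (simp add: interleave_def)

lemma definable_eq_vc: "definable E (\<lambda>e. e i = c)"
  unfolding definable_def
  by (rule exI[of _ "Eq (2*i) 1"], rule exI[of _ "\<lambda>_. c"]) (simp add: interleave_def)

lemma definable_eq_cv: "definable E (\<lambda>e. c = e i)"
  unfolding definable_def
  by (rule exI[of _ "Eq 1 (2*i)"], rule exI[of _ "\<lambda>_. c"]) (simp add: interleave_def)

lemma definable_const: "definable E (\<lambda>e. b)"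
  unfolding definable_def by (rule exI[of _ "if b then Eq 0 0 else Neg (Eq 0 0)"]) simp

lemma definable_cls: "definable E (\<lambda>e. cls E \<phi> env (e i))"
proof -
  have "interleave e env \<circ> case_nat (2*i) (\<lambda>n. 2*n+1) = case_nat (e i) env" for e
    by (rule ext) (simp add: interleave_def split: nat.split)
  then show ?thesis unfolding definable_def cls_def
    by (intro exI[of _ "rename_fm (case_nat (2*i) (\<lambda>n. 2*n+1)) \<phi>"] exI[of _ env])
      (simp add: sat_rename_fm)
qed

lemma definable_neg:
  assumes "definable E P"
  shows "definable E (\<lambda>e. \<not> P e)"
proof -
  obtain \<psi> r where "\<And>e. sat E (interleave e r) \<psi> = P e"
    using assms unfolding definable_def by blast
  then have "\<forall>e. sat E (interleave e r) (Neg \<psi>) = (\<not> P e)" by simp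
  then show ?thesis unfolding definable_def by blast
qed

lemma definable_conj:
  assumes "definable E P" "definable E Q"
  shows "definable E (\<lambda>e. P e \<and> Q e)"
proof -
  obtain \<psi> r where \<psi>: "\<And>e. sat E (interleave e r) \<psi> = P e"
    using assms(1) unfolding definable_def by blast
  obtain \<chi> s where \<chi>: "\<And>e. sat E (interleave e s) \<chi> = Q e"
    using assms(2) unfolding definable_def by blast
  have "interleave r s \<circ> (\<lambda>k. 2 * k) = r" "interleave r s \<circ> (\<lambda>k. Suc (2 * k)) = s"
    by (auto simp: interleave_def)
  then have "sat E (interleave e (interleave r s))
      (Conj (rename_fm (interleave_map id (\<lambda>k. 2 * k)) \<psi>)
            (rename_fm (interleave_map id (\<lambda>k. Suc (2 * k))) \<chi>)) = (P e \<and> Q e)" for e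
    by (simp add: sat_rename_fm interleave_comp_interleave_map \<psi> \<chi>)
  then show ?thesis unfolding definable_def by blast
qed

lemma definable_ex:
  fixes Q :: "(nat \<Rightarrow> 'm) \<Rightarrow> 'm \<Rightarrow> bool"
  assumes "definable E (\<lambda>e. Q (\<lambda>n. e (Suc n)) (e 0))"
  shows "definable E (\<lambda>e. \<exists>a. Q e a)"
proof -
  obtain \<psi> r where \<psi>: "\<And>e. sat E (interleave e r) \<psi> = Q (\<lambda>n. e (Suc n)) (e 0)"
    using assms unfolding definable_def by blast
  define h where "h n = (if n = 0 then 0 else if even n then n - 1 else n + 1)" for n :: nat
  have "case_nat a (interleave e r) \<circ> h = interleave (case_nat a e) r" for a e
  proof (rule ext)
    fix n
    show "(case_nat a (interleave e r) \<circ> h) n = interleave (case_nat a e) r n"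
    proof (cases "n = 0")
      case True then show ?thesis by (simp add: interleave_def h_def)
    next
      case n0: False
      show ?thesis
      proof (cases "even n")
        case True
        then obtain k0 where k0: "n = 2*k0" by blast
        with n0 obtain k where "n = 2*k+2" by (cases k0) auto
        then show ?thesis by (simp add: interleave_def h_def)
      next
        case False
        then obtain k where "n = 2*k+1" by (metis oddE)
        then show ?thesis by (simp add: interleave_def h_def)
      qed
    qed
  qed
  then have "sat E (interleave e r) (Ex (rename_fm h \<psi>)) = (\<exists>a. Q e a)" for e
    by (simp add: sat_rename_fm \<psi>)
  then show ?thesis unfolding definable_def by blast
qed

lemma definable_disj:
  assumes "definable E P" "definable E Q"
  shows "definable E (\<lambda>e. P e \<or> Q e)"
proof -
  have "definable E (\<lambda>e. \<not> (\<not> P e \<and> \<not> Q e))"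
    by (intro definable_neg definable_conj assms)
  then show ?thesis by simp
qed

lemma definable_imp:
  assumes "definable E P" "definable E Q"
  shows "definable E (\<lambda>e. P e \<longrightarrow> Q e)"
proof -
  have "definable E (\<lambda>e. \<not> (P e \<and> \<not> Q e))"
    by (intro definable_neg definable_conj assms)
  then show ?thesis by simp
qed

lemma definable_iff:
  assumes "definable E P" "definable E Q"
  shows "definable E (\<lambda>e. P e \<longleftrightarrow> Q e)"
proof -
  have "definable E (\<lambda>e. (P e \<longrightarrow> Q e) \<and> (Q e \<longrightarrow> P e))"
    by (intro definable_conj definable_imp assms)
  then show ?thesis by (simp add: iff_conv_conj_imp)
qed

lemma definable_all:
  fixes Q :: "(nat \<Rightarrow> 'm) \<Rightarrow> 'm \<Rightarrow> bool"
  assumes "definable E (\<lambda>e. Q (\<lambda>n. e (Suc n)) (e 0))"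
  shows "definable E (\<lambda>e. \<forall>a. Q e a)"
proof -
  have "definable E (\<lambda>e. \<not> (\<exists>a. \<not> Q e a))"
    by (intro definable_neg definable_ex) (rule assms)
  then show ?thesis by simp
qed

lemmas definable_intros = definable_conj definable_disj definable_imp definable_iff definable_neg
  definable_ex definable_all definable_mem_vv definable_mem_vc definable_mem_cv
  definable_eq_vv definable_eq_vc definable_eq_cv definable_cls definable_const

section \<open>Elementary set theory in a model\<close>

locale zftm =
  fixes E :: "'m \<Rightarrow> 'm \<Rightarrow> bool"
  assumes ZFTM: "ZFTM E"
begin

lemma ext_eq: "(\<And>z. E z x \<longleftrightarrow> E z y) \<Longrightarrow> x = y"
  using ZFTM unfolding ZFTM_def ax_ext_def by blast

lemma separation:
  assumes "definable E (\<lambda>e. P (e 0))"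
  shows "\<exists>b. \<forall>z. E z b \<longleftrightarrow> E z a \<and> P z"
proof -
  obtain \<psi> r where \<psi>: "\<And>e. sat E (interleave e r) \<psi> = P (e 0)"
    using assms unfolding definable_def by blast
  define h where "h n = (if even n then 0 else Suc (n div 2))" for n :: nat
  have "case_nat z r \<circ> h = interleave (\<lambda>_. z) r" for z
    by (rule ext) (simp add: h_def interleave_def)
  then have "sat E (case_nat z r) (rename_fm h \<psi>) = P z" for z
    by (simp add: sat_rename_fm \<psi>)
  moreover obtain b where "\<forall>z. E z b \<longleftrightarrow> E z a \<and> sat E (case_nat z r) (rename_fm h \<psi>)"
    using ZFTM unfolding ZFTM_def ax_sep_def by blast
  ultimately show ?thesis by auto
qed

lemma regularity: "E y x \<Longrightarrow> \<exists>m. E m x \<and> (\<forall>z. E z m \<longrightarrow> \<not> E z x)"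
  using ZFTM unfolding ZFTM_def ax_reg_def by blast

lemma exists_itrans_superset: "\<exists>t. isubset E x t \<and> itrans E t"
  using ZFTM unfolding ZFTM_def ax_TS_def by blast

lemma exists_inj_into_nat:
  "\<exists>f. ifun E f \<and> idom E f x \<and> iinj E f \<and> (\<forall>a b. inrel E f a b \<longrightarrow> inat E b)"
  using ZFTM unfolding ZFTM_def ax_count_def by blast

lemma mostowski_collapse:
  assumes "irel E A" "iwf E A" "iextensional E A"
  shows "\<exists>Fd X \<eta>. (\<forall>x. E x Fd \<longleftrightarrow> ifld E A x) \<and> itrans E X \<and> ibij E \<eta> Fd X \<and>
    (\<forall>j k a b. inrel E \<eta> j a \<and> inrel E \<eta> k b \<longrightarrow> (inrel E A j k \<longleftrightarrow> E a b))"
  using ZFTM assms unfolding ZFTM_def ax_MC_def by blast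

definition set_of :: "('m \<Rightarrow> bool) \<Rightarrow> 'm" where
  "set_of P = (THE s. \<forall>z. E z s \<longleftrightarrow> P z)"

lemma mem_set_of:
  assumes "is_set E P"
  shows "E z (set_of P) \<longleftrightarrow> P z"
proof -
  obtain s where s: "\<And>z. E z s \<longleftrightarrow> P z"
    using assms unfolding is_set_def by blast
  have "set_of P = s"
    unfolding set_of_def by (rule the_equality) (use s in \<open>auto intro: ext_eq\<close>)
  then show ?thesis using s by simp
qed

definition upair :: "'m \<Rightarrow> 'm \<Rightarrow> 'm" where
  "upair a b = set_of (\<lambda>z. z = a \<or> z = b)"

lemma upair_mem [simp]: "E z (upair a b) \<longleftrightarrow> z = a \<or> z = b"
  unfolding upair_def
  by (rule mem_set_of) (use ZFTM in \<open>auto simp: ZFTM_def ax_pair_def iupair_def is_set_def\<close>)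

definition Uni :: "'m \<Rightarrow> 'm" where
  "Uni a = set_of (\<lambda>z. \<exists>y. E z y \<and> E y a)"

lemma Uni_mem [simp]: "E z (Uni a) \<longleftrightarrow> (\<exists>y. E z y \<and> E y a)"
  unfolding Uni_def
  by (rule mem_set_of) (use ZFTM in \<open>auto simp: ZFTM_def ax_union_def is_set_def\<close>)

definition emp :: 'm where
  "emp = set_of (\<lambda>z. False)"

lemma emp_mem [simp]: "\<not> E z emp"
proof -
  have "definable E (\<lambda>e. False)" by (rule definable_const)
  then have "is_set E (\<lambda>z. False)"
    unfolding is_set_def using separation by fastforce
  then show ?thesis unfolding emp_def using mem_set_of by blast
qed

definition union2 :: "'m \<Rightarrow> 'm \<Rightarrow> 'm" where
  "union2 a b = Uni (upair a b)"

lemma union2_mem [simp]: "E z (union2 a b) \<longleftrightarrow> E z a \<or> E z b"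
  unfolding union2_def by auto

definition succ :: "'m \<Rightarrow> 'm" where
  "succ x = union2 x (upair x x)"

lemma succ_mem [simp]: "E z (succ x) \<longleftrightarrow> E z x \<or> z = x"
  unfolding succ_def by auto

definition opair :: "'m \<Rightarrow> 'm \<Rightarrow> 'm" where
  "opair a b = upair (upair a a) (upair a b)"

lemma iupair_iff: "iupair E u a b \<longleftrightarrow> u = upair a b"
  unfolding iupair_def by (auto intro: ext_eq)

lemma iopair_iff: "iopair E p a b \<longleftrightarrow> p = opair a b"
  unfolding iopair_def iupair_iff opair_def by (auto intro: ext_eq)

lemma upair_eq_iff: "upair a b = upair c d \<longleftrightarrow> (a = c \<and> b = d) \<or> (a = d \<and> b = c)"
proof
  assume "upair a b = upair c d"
  then have "z = a \<or> z = b \<longleftrightarrow> z = c \<or> z = d" for z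
    by (metis upair_mem)
  then show "(a = c \<and> b = d) \<or> (a = d \<and> b = c)" by metis
next
  assume "(a = c \<and> b = d) \<or> (a = d \<and> b = c)"
  then show "upair a b = upair c d" by (intro ext_eq) auto
qed

lemma opair_inject [simp]: "opair a b = opair c d \<longleftrightarrow> a = c \<and> b = d"
  unfolding opair_def upair_eq_iff by blast

lemma inrel_iff: "inrel E A a b \<longleftrightarrow> E (opair a b) A"
  unfolding inrel_def iopair_iff by auto

lemma inrel_mem_Uni_Uni: "inrel E f a b \<Longrightarrow> E b (Uni (Uni f))"
  unfolding inrel_iff Uni_mem opair_def by (metis upair_mem)

lemma itrans_emp: "itrans E emp"
  unfolding itrans_def by simp

lemma not_mem_self: "\<not> E x x"
proof
  assume "E x x"
  obtain y where "E y (upair x x)" "\<forall>z. E z y \<longrightarrow> \<not> E z (upair x x)"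
    using regularity[of x "upair x x"] by auto
  with \<open>E x x\<close> show False by auto
qed

lemma opair_not_mem_itrans:
  assumes "itrans E T"
  shows "\<not> E (opair x T) T"
proof
  assume "E (opair x T) T"
  then have "E (upair x T) T"
    using assms unfolding itrans_def opair_def by (meson upair_mem)
  then have "E T T"
    using assms unfolding itrans_def by (meson upair_mem)
  then show False by (simp add: not_mem_self)
qed


lemma iinductive_iff: "iinductive E I \<longleftrightarrow> E emp I \<and> (\<forall>x. E x I \<longrightarrow> E (succ x) I)"
proof -
  have "iempty E e \<longleftrightarrow> e = emp" for e
    unfolding iempty_def by (auto intro: ext_eq)
  moreover have "isucc E s x \<longleftrightarrow> s = succ x" for s x
    unfolding isucc_def by (auto intro: ext_eq)
  ultimately show ?thesis unfolding iinductive_def by auto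
qed

lemma inat_emp: "inat E emp"
  unfolding inat_def iinductive_iff by auto

lemma inat_succ: "inat E x \<Longrightarrow> inat E (succ x)"
  unfolding inat_def iinductive_iff by auto

lemma nat_induct [consumes 1, case_names definable emp succ]:
  assumes "inat E n"
    and "definable E (\<lambda>e. P (e 0))"
    and "P emp"
    and "\<And>x. inat E x \<Longrightarrow> P x \<Longrightarrow> P (succ x)"
  shows "P n"
proof -
  obtain I where "iinductive E I"
    using ZFTM unfolding ZFTM_def ax_inf_def by blast
  have "\<exists>J. \<forall>z. E z J \<longleftrightarrow> E z I \<and> inat E z \<and> P z"
    by (rule separation)
      (unfold inat_def iinductive_def iempty_def isucc_def, intro definable_intros assms(2))
  then obtain J where J: "\<And>z. E z J \<longleftrightarrow> E z I \<and> inat E z \<and> P z" by blast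
  have "iinductive E J"
    using \<open>iinductive E I\<close> J assms(3,4) inat_emp inat_succ unfolding iinductive_iff by blast
  then show ?thesis using assms(1) J unfolding inat_def by blast
qed

lemma nat_itrans: "inat E n \<Longrightarrow> itrans E n"
proof (induction rule: nat_induct)
  case definable
  show ?case unfolding itrans_def by (intro definable_intros)
qed (auto simp: itrans_def)

lemma nat_itrans_subset_mem_or_eq:
  assumes "inat E m" "itrans E k" "isubset E k m"
  shows "E k m \<or> k = m"
  using assms
proof (induction arbitrary: k rule: nat_induct)
  case definable
  show ?case unfolding itrans_def isubset_def by (intro definable_intros)
next
  case emp
  then show ?case unfolding isubset_def by (auto intro: ext_eq)
next
  case (succ m)
  show ?case
  proof (cases "E m k")
    case True
    then have "isubset E m k" using succ.prems(1) unfolding itrans_def isubset_def by blast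
    then have "k = succ m"
      using True succ.prems(2) unfolding isubset_def by (intro ext_eq) auto
    then show ?thesis by simp
  next
    case False
    then have "isubset E k m" using succ.prems(2) unfolding isubset_def by auto
    then show ?thesis using succ.IH succ.prems(1) by auto
  qed
qed

lemma nat_mem_or_subset:
  assumes "inat E n" "inat E m"
  shows "E m n \<or> isubset E n m"
  using assms
proof (induction arbitrary: m rule: nat_induct)
  case definable
  show ?case
    unfolding inat_def iinductive_def iempty_def isucc_def isubset_def by (intro definable_intros)
next
  case emp
  then show ?case unfolding isubset_def by simp
next
  case (succ n)
  from succ.IH[OF succ.prems] show ?case
  proof
    assume "isubset E n m"
    moreover have "E n m \<or> n = m"
      using nat_itrans_subset_mem_or_eq[OF succ.prems nat_itrans[OF succ.hyps(1)] calculation] .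
    ultimately show ?thesis unfolding isubset_def by auto
  qed simp
qed

lemma nat_set_has_least:
  assumes "\<And>n. E n N \<Longrightarrow> inat E n" and "E n0 N"
  shows "\<exists>m. E m N \<and> (\<forall>n. E n N \<longrightarrow> isubset E m n)"
proof -
  obtain m where m: "E m N" "\<forall>z. E z m \<longrightarrow> \<not> E z N"
    using regularity[OF assms(2)] by blast
  have "isubset E m n" if "E n N" for n
    using nat_mem_or_subset[of m n] assms(1) m that by blast
  with m show ?thesis by blast
qed

lemma finite_upair: "ifinite E (upair a b)"
proof -
  define one where "one = succ emp"
  have nat_one: "inat E one" and nat_two: "inat E (succ one)"
    unfolding one_def by (intro inat_succ inat_emp)+
  have one_ne_emp: "one \<noteq> emp"
    unfolding one_def by (metis emp_mem succ_mem)
  show ?thesis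
  proof (cases "a = b")
    case True
    define f where "f = upair (opair emp a) (opair emp a)"
    have f: "inrel E f u v \<longleftrightarrow> u = emp \<and> v = a" for u v
      unfolding inrel_iff f_def by auto
    have "ibij E f one (upair a b)"
      unfolding ibij_def ifun_def irel_def idom_def iran_def iinj_def f iopair_iff
      using True by (auto simp: f_def one_def)
    with nat_one show ?thesis unfolding ifinite_def by blast
  next
    case False
    define f where "f = upair (opair emp a) (opair one b)"
    have f: "inrel E f u v \<longleftrightarrow> (u = emp \<and> v = a) \<or> (u = one \<and> v = b)" for u v
      unfolding inrel_iff f_def by auto
    have "ibij E f (succ one) (upair a b)"
      unfolding ibij_def ifun_def irel_def idom_def iran_def iinj_def f iopair_iff
      using False one_ne_emp by (auto simp: f_def one_def)
    with nat_two show ?thesis unfolding ifinite_def by blast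
  qed
qed

text \<open>Two applications of (FC): the first superset contains all pairs \<open>{a, b}\<close> of elements
  of \<open>X\<close>, the second all pairs of those, hence all ordered pairs.\<close>

lemma exists_opair_superset: "\<exists>P. \<forall>a b. E a X \<and> E b X \<longrightarrow> E (opair a b) P"
proof -
  have FC: "\<exists>Y. isubset E X Y \<and> (\<forall>x. isubset E x Y \<and> ifinite E x \<longrightarrow> E x Y)" for X
    using ZFTM unfolding ZFTM_def ax_FC_def by blast
  obtain Y1 where Y1: "isubset E X Y1" "\<And>x. isubset E x Y1 \<Longrightarrow> ifinite E x \<Longrightarrow> E x Y1"
    using FC by blast
  obtain Y2 where Y2: "isubset E Y1 Y2" "\<And>x. isubset E x Y2 \<Longrightarrow> ifinite E x \<Longrightarrow> E x Y2"
    using FC by blast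
  have "E (opair a b) Y2" if "E a X" "E b X" for a b
  proof -
    have "E (upair a a) Y1" "E (upair a b) Y1"
      using that Y1 by (auto intro!: Y1(2) finite_upair simp: isubset_def)
    then show ?thesis unfolding opair_def
      using Y2 by (auto intro!: Y2(2) finite_upair simp: isubset_def)
  qed
  then show ?thesis by blast
qed

lemma exists_tagged_copy: "\<exists>C. \<forall>u. E u C \<longleftrightarrow> (\<exists>x. E x A \<and> u = opair x t)"
proof -
  obtain P where P: "\<And>a b. E a (union2 A (upair t t)) \<Longrightarrow> E b (union2 A (upair t t)) \<Longrightarrow> E (opair a b) P"
    using exists_opair_superset by blast
  have "\<exists>C. \<forall>u. E u C \<longleftrightarrow> E u P \<and> (\<exists>x. E x A \<and> iopair E u x t)"
    by (rule separation) (unfold iopair_def iupair_def, intro definable_intros)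
  then obtain C where C: "\<And>u. E u C \<longleftrightarrow> E u P \<and> (\<exists>x. E x A \<and> iopair E u x t)" by blast
  have "E u C \<longleftrightarrow> (\<exists>x. E x A \<and> u = opair x t)" for u
    unfolding C iopair_iff using P by auto
  then show ?thesis by blast
qed

lemma iwf_induct:
  assumes "iwf E A" and B_fld: "\<And>x. E x B \<Longrightarrow> ifld E A x"
    and "definable E (\<lambda>e. P (e 0))"
    and step: "\<And>u. E u B \<Longrightarrow> (\<And>i. E i B \<Longrightarrow> inrel E A i u \<Longrightarrow> P i) \<Longrightarrow> P u"
    and "E u B"
  shows "P u"
proof (rule ccontr)
  assume "\<not> P u"
  have "\<exists>C. \<forall>x. E x C \<longleftrightarrow> E x B \<and> \<not> P x"
    by (rule separation) (intro definable_neg assms(3))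
  then obtain C where C: "\<And>x. E x C \<longleftrightarrow> E x B \<and> \<not> P x" by blast
  obtain m where "E m C" "\<not> (\<exists>i. E i C \<and> inrel E A i m)"
    using \<open>iwf E A\<close> C B_fld \<open>E u B\<close> \<open>\<not> P u\<close> unfolding iwf_def by blast
  then show False using step C by blast
qed

end

section \<open>Injective class functions with transitive image\<close>

locale inj_transitive_image = zftm E for E :: "'m \<Rightarrow> 'm \<Rightarrow> bool" +
  fixes S :: 'm and g :: "'m \<Rightarrow> 'm"
  assumes graph_definable: "definable E (\<lambda>e. E (e 0) S \<and> e 1 = g (e 0))"
    and inj_g: "\<lbrakk>E u S; E v S; g u = g v\<rbrakk> \<Longrightarrow> u = v"
    and image_transitive: "\<lbrakk>E u S; E z (g u)\<rbrakk> \<Longrightarrow> \<exists>v. E v S \<and> z = g v"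
begin

definition graph :: "'m \<Rightarrow> 'm \<Rightarrow> bool" where
  "graph u w \<longleftrightarrow> E u S \<and> w = g u"

lemma definable_graph: "definable E (\<lambda>e. graph (e i) (e j))"
  using definable_reindex[OF graph_definable, of "\<lambda>n. if n = 0 then i else j"]
  by (simp add: graph_def)

lemma exists_image_memrel:
  "\<exists>A. irel E A \<and> (\<forall>u v. inrel E A u v \<longleftrightarrow> E u S \<and> E v S \<and> E (g u) (g v))"
proof -
  obtain P where P: "\<And>a b. E a S \<Longrightarrow> E b S \<Longrightarrow> E (opair a b) P"
    using exists_opair_superset by blast
  have "\<exists>A. \<forall>p. E p A \<longleftrightarrow> E p P \<and> (\<exists>u v w w'. graph u w \<and> graph v w' \<and> iopair E p u v \<and> E w w')"
    by (rule separation) (unfold iopair_def iupair_def, intro definable_intros definable_graph)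
  then obtain A where A0: "\<And>p. E p A \<longleftrightarrow> E p P \<and> (\<exists>u v w w'. graph u w \<and> graph v w' \<and> iopair E p u v \<and> E w w')"
    by blast
  have A: "E p A \<longleftrightarrow> E p P \<and> (\<exists>u v. E u S \<and> E v S \<and> p = opair u v \<and> E (g u) (g v))" for p
    unfolding A0 graph_def iopair_iff by auto
  have "inrel E A u v \<longleftrightarrow> E u S \<and> E v S \<and> E (g u) (g v)" for u v
    unfolding inrel_iff A using P by auto
  moreover have "irel E A"
    unfolding irel_def iopair_iff A by blast
  ultimately show ?thesis by blast
qed

definition memrel :: 'm where
  "memrel = (SOME A. irel E A \<and> (\<forall>u v. inrel E A u v \<longleftrightarrow> E u S \<and> E v S \<and> E (g u) (g v)))"

lemma irel_memrel: "irel E memrel"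
  and inrel_memrel: "inrel E memrel u v \<longleftrightarrow> E u S \<and> E v S \<and> E (g u) (g v)"
  using someI_ex[OF exists_image_memrel] unfolding memrel_def by blast+

lemma ifld_memrel: "ifld E memrel u \<Longrightarrow> E u S"
  unfolding ifld_def inrel_memrel by blast

lemma iextensional_memrel: "iextensional E memrel"
  unfolding iextensional_def
proof (intro allI impI)
  fix j k
  assume jk: "ifld E memrel j \<and> ifld E memrel k \<and> (\<forall>i. inrel E memrel i j \<longleftrightarrow> inrel E memrel i k)"
  then have "E j S" "E k S" by (auto dest: ifld_memrel)
  have "E z (g j) \<longleftrightarrow> E z (g k)" for z
  proof -
    have "E z (g j) \<longleftrightarrow> (\<exists>v. E v S \<and> z = g v \<and> inrel E memrel v j)"
      using image_transitive \<open>E j S\<close> unfolding inrel_memrel by blast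
    also have "\<dots> \<longleftrightarrow> (\<exists>v. E v S \<and> z = g v \<and> inrel E memrel v k)"
      using jk by blast
    also have "\<dots> \<longleftrightarrow> E z (g k)"
      using image_transitive \<open>E k S\<close> unfolding inrel_memrel by blast
    finally show ?thesis .
  qed
  then have "g j = g k" by (rule ext_eq)
  then show "j = k" using inj_g \<open>E j S\<close> \<open>E k S\<close> by blast
qed

text \<open>A \<open>\<in>\<close>-minimal value, found by regularity inside a transitive superset of one value,
  is the value of a \<open>memrel\<close>-minimal element.\<close>

lemma iwf_memrel: "iwf E memrel"
  unfolding iwf_def
proof (intro allI impI)
  fix B assume B: "(\<exists>x. E x B) \<and> (\<forall>x. E x B \<longrightarrow> ifld E memrel x)"
  then obtain u0 where "E u0 B" by blast
  have BS: "E x S" if "E x B" for x using B ifld_memrel that by blast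
  obtain W where W: "isubset E (upair (g u0) (g u0)) W" "itrans E W"
    using exists_itrans_superset by blast
  have "\<exists>V. \<forall>z. E z V \<longleftrightarrow> E z W \<and> (\<exists>u. E u B \<and> graph u z)"
    by (rule separation) (intro definable_intros definable_graph)
  then obtain V where V0: "\<And>z. E z V \<longleftrightarrow> E z W \<and> (\<exists>u. E u B \<and> graph u z)"
    by blast
  have V: "E z V \<longleftrightarrow> E z W \<and> (\<exists>u. E u B \<and> z = g u)" for z
    unfolding V0 graph_def using BS by blast
  have "E (g u0) V"
    using W(1) \<open>E u0 B\<close> unfolding V isubset_def by auto
  then obtain z0 where z0: "E z0 V" "\<forall>z. E z z0 \<longrightarrow> \<not> E z V"
    using regularity by blast
  then obtain m where m: "E m B" "z0 = g m" using V by blast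
  have "\<not> inrel E memrel i m" if "E i B" for i
  proof
    assume "inrel E memrel i m"
    then have "E (g i) z0" unfolding inrel_memrel m by blast
    moreover have "E z0 W" using z0(1) V by blast
    ultimately have "E (g i) V" using W(2) that unfolding V itrans_def by blast
    with z0(2) \<open>E (g i) z0\<close> show False by blast
  qed
  with m show "\<exists>m. E m B \<and> \<not> (\<exists>i. E i B \<and> inrel E memrel i m)" by blast
qed

lemma collapse_eq_g:
  assumes Fd: "\<And>x. E x Fd \<longleftrightarrow> ifld E memrel x" and X: "itrans E X" and \<eta>: "ibij E \<eta> Fd X"
    and iso: "\<And>j k a b. inrel E \<eta> j a \<Longrightarrow> inrel E \<eta> k b \<Longrightarrow> inrel E memrel j k \<longleftrightarrow> E a b"
    and "E u Fd"
  shows "inrel E \<eta> u (g u)"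
proof -
  have \<eta>_fun: "\<And>a b b'. inrel E \<eta> a b \<Longrightarrow> inrel E \<eta> a b' \<Longrightarrow> b = b'"
    and \<eta>_dom: "\<And>a. E a Fd \<longleftrightarrow> (\<exists>b. inrel E \<eta> a b)"
    and \<eta>_ran: "\<And>b. E b X \<longleftrightarrow> (\<exists>a. inrel E \<eta> a b)"
    using \<eta> unfolding ibij_def ifun_def idom_def iran_def by blast+
  have "\<exists>w. graph u w \<and> inrel E \<eta> u w"
  proof (rule iwf_induct[OF iwf_memrel, where B = Fd and P = "\<lambda>u. \<exists>w. graph u w \<and> inrel E \<eta> u w"])
    show "E x Fd \<Longrightarrow> ifld E memrel x" for x using Fd by blast
    show "E u Fd" by fact
    show "definable E (\<lambda>e. \<exists>w. graph (e 0) w \<and> inrel E \<eta> (e 0) w)"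
      unfolding inrel_def iopair_def iupair_def by (intro definable_intros definable_graph)
  next
    fix u assume "E u Fd"
      and IH: "\<And>i. E i Fd \<Longrightarrow> inrel E memrel i u \<Longrightarrow> \<exists>w. graph i w \<and> inrel E \<eta> i w"
    have "E u S" using \<open>E u Fd\<close> Fd ifld_memrel by blast
    obtain a where a: "inrel E \<eta> u a" using \<eta>_dom \<open>E u Fd\<close> by blast
    have "E z a \<longleftrightarrow> E z (g u)" for z
    proof
      assume "E z a"
      moreover have "E a X" using a \<eta>_ran by blast
      ultimately obtain j where j: "inrel E \<eta> j z" using X \<eta>_ran unfolding itrans_def by blast
      then have ju: "inrel E memrel j u" using iso[OF j a] \<open>E z a\<close> by blast
      then have "E j Fd" using Fd unfolding ifld_def by blast
      then have "z = g j" using IH[OF _ ju] j \<eta>_fun unfolding graph_def by blast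
      then show "E z (g u)" using ju inrel_memrel by simp
    next
      assume "E z (g u)"
      then obtain v where v: "E v S" "z = g v" using image_transitive \<open>E u S\<close> by blast
      then have vu: "inrel E memrel v u" using \<open>E u S\<close> \<open>E z (g u)\<close> inrel_memrel by simp
      then have "E v Fd" using Fd unfolding ifld_def by blast
      then have "inrel E \<eta> v z" using IH[OF _ vu] v unfolding graph_def by blast
      then show "E z a" using iso[OF _ a] vu by blast
    qed
    then have "a = g u" by (rule ext_eq)
    then show "\<exists>w. graph u w \<and> inrel E \<eta> u w" using a \<open>E u S\<close> unfolding graph_def by blast
  qed
  then show ?thesis unfolding graph_def by blast
qed

lemma image_is_set: "is_set E (\<lambda>z. \<exists>u. E u S \<and> z = g u)"
proof -
  obtain Fd X \<eta> where Fd: "\<And>x. E x Fd \<longleftrightarrow> ifld E memrel x" and X: "itrans E X"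
    and \<eta>: "ibij E \<eta> Fd X"
    and iso: "\<And>j k a b. inrel E \<eta> j a \<Longrightarrow> inrel E \<eta> k b \<Longrightarrow> inrel E memrel j k \<longleftrightarrow> E a b"
    using mostowski_collapse[OF irel_memrel iwf_memrel iextensional_memrel] by blast
  have "E (g u) X \<or> g u = emp" if "E u S" for u
  proof (cases "E u Fd")
    case True
    then have "inrel E \<eta> u (g u)" using collapse_eq_g Fd X \<eta> iso by blast
    then show ?thesis using \<eta> unfolding ibij_def iran_def by blast
  next
    case False
    have "\<not> E z (g u)" for z
    proof
      assume "E z (g u)"
      then obtain v where "E v S" "z = g v" using image_transitive \<open>E u S\<close> by blast
      then have "inrel E memrel v u" using \<open>E z (g u)\<close> \<open>E u S\<close> inrel_memrel by simp
      then show False using False Fd unfolding ifld_def by blast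
    qed
    then show ?thesis by (auto intro: ext_eq)
  qed
  moreover have "\<exists>R. \<forall>z. E z R \<longleftrightarrow> E z (union2 X (upair emp emp)) \<and> (\<exists>u. graph u z)"
    by (rule separation) (intro definable_intros definable_graph)
  ultimately show ?thesis unfolding is_set_def graph_def by auto
qed

end

section \<open>Class functions\<close>

locale zftm_class_fun = zftm E for E :: "'m \<Rightarrow> 'm \<Rightarrow> bool" +
  fixes \<phi> :: fm and env :: "nat \<Rightarrow> 'm"
  assumes class_fun: "is_class_fun E \<phi> env"
begin

abbreviation app :: "'m \<Rightarrow> 'm \<Rightarrow> bool" where
  "app \<equiv> cf_app E \<phi> env"

lemma app_functional: "app x y \<Longrightarrow> app x y' \<Longrightarrow> y = y'"
  using class_fun unfolding is_class_fun_def cf_app_def by blast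

lemma definable_app: "definable E (\<lambda>e. app (e i) (e j))"
  unfolding cf_app_def iopair_def iupair_def by (intro definable_intros)

lemma exists_least_code_preimage:
  assumes f_dom: "idom E f D" and f_nat: "\<And>a b. inrel E f a b \<Longrightarrow> inat E b"
    and D: "\<And>x. E x D \<longleftrightarrow> (\<exists>y. app x y)" and "app x y"
  shows "\<exists>x1 m. app x1 y \<and> inrel E f x1 m \<and> (\<forall>x' n. app x' y \<and> inrel E f x' n \<longrightarrow> isubset E m n)"
proof -
  have "\<exists>N. \<forall>n. E n N \<longleftrightarrow> E n (Uni (Uni f)) \<and> (\<exists>x'. app x' y \<and> inrel E f x' n)"
    by (rule separation) (unfold cf_app_def inrel_def iopair_def iupair_def, intro definable_intros)
  then obtain N where N0: "\<And>n. E n N \<longleftrightarrow> E n (Uni (Uni f)) \<and> (\<exists>x'. app x' y \<and> inrel E f x' n)"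
    by blast
  have N: "E n N \<longleftrightarrow> (\<exists>x'. app x' y \<and> inrel E f x' n)" for n
    unfolding N0 using inrel_mem_Uni_Uni by blast
  obtain n0 where "inrel E f x n0"
    using f_dom D \<open>app x y\<close> unfolding idom_def by blast
  then have "E n0 N" using N \<open>app x y\<close> by blast
  moreover have "inat E n" if "E n N" for n
    using N f_nat that by blast
  ultimately obtain m where "E m N" "\<And>n. E n N \<Longrightarrow> isubset E m n"
    using nat_set_has_least[of N] by blast
  then show ?thesis using N by blast
qed

text \<open>Representatives are chosen as the preimages with least code under an injection of the
  domain into \<open>\<omega>\<close>.\<close>

lemma exists_transversal:
  assumes D: "\<And>x. E x D \<longleftrightarrow> (\<exists>y. app x y)"
  shows "\<exists>D0. (\<forall>x. E x D0 \<longrightarrow> E x D) \<and> (\<forall>x y. app x y \<longrightarrow> (\<exists>!x'. E x' D0 \<and> app x' y))"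
proof -
  obtain f where f_fun: "ifun E f" and f_dom: "idom E f D" and f_inj: "iinj E f"
    and f_nat: "\<And>a b. inrel E f a b \<Longrightarrow> inat E b"
    using exists_inj_into_nat[of D] by blast
  have code_unique: "n = n'" if "inrel E f x n" "inrel E f x n'" for x n n'
    using f_fun that unfolding ifun_def by blast
  define least_code where "least_code x \<longleftrightarrow>
    (\<forall>y x' n n'. app x y \<and> app x' y \<and> inrel E f x n \<and> inrel E f x' n' \<longrightarrow> isubset E n n')" for x
  have "\<exists>D0. \<forall>x. E x D0 \<longleftrightarrow> E x D \<and> least_code x"
    unfolding least_code_def
    by (rule separation) (unfold inrel_def iopair_def iupair_def isubset_def, intro definable_intros definable_app)
  then obtain D0 where D0: "\<And>x. E x D0 \<longleftrightarrow> E x D \<and> least_code x"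
    by blast
  have exists: "\<exists>x'. E x' D0 \<and> app x' y" if xy: "app x y" for x y
  proof -
    obtain x1 m where x1: "app x1 y" "inrel E f x1 m"
      and least: "\<And>x' n. app x' y \<Longrightarrow> inrel E f x' n \<Longrightarrow> isubset E m n"
      using exists_least_code_preimage[of f D x y] f_dom f_nat D xy by blast
    have "least_code x1"
      unfolding least_code_def
    proof (intro allI impI)
      fix y' x' n n' assume h: "app x1 y' \<and> app x' y' \<and> inrel E f x1 n \<and> inrel E f x' n'"
      then have "y' = y" using app_functional x1(1) by blast
      moreover have "n = m" using code_unique x1(2) h by blast
      ultimately show "isubset E n n'" using least h by blast
    qed
    then show ?thesis unfolding D0 using D x1(1) by blast
  qed
  have unique: "x = x'" if "E x D0" "E x' D0" "app x y" "app x' y" for x x' y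
  proof -
    have "E x D" "E x' D" "least_code x" "least_code x'" using D0 that(1,2) by blast+
    then obtain n n' where n: "inrel E f x n" and n': "inrel E f x' n'"
      using f_dom unfolding idom_def by blast
    have "isubset E n n'" "isubset E n' n"
      using \<open>least_code x\<close> \<open>least_code x'\<close> that(3,4) n n' unfolding least_code_def by blast+
    then have "n = n'" unfolding isubset_def by (blast intro: ext_eq)
    then show ?thesis using f_inj n n' unfolding iinj_def by blast
  qed
  have "\<exists>!x'. E x' D0 \<and> app x' y" if "app x y" for x y
    using exists[OF that] unique by blast
  then show ?thesis using D0 by blast
qed

text \<open>Values outside \<open>T\<close> are represented by the tags \<open>(x, T)\<close>, which never lie in \<open>T\<close>.\<close>

lemma range_on_is_set:
  assumes T: "itrans E T"
    and outside_T: "\<And>x. E x D \<Longrightarrow> \<exists>y. app x y \<and> \<not> E y T"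
    and inj: "\<And>x x' y. \<lbrakk>E x D; E x' D; app x y; app x' y\<rbrakk> \<Longrightarrow> x = x'"
    and closed: "\<And>x y z. \<lbrakk>E x D; app x y; E z y\<rbrakk> \<Longrightarrow> E z T \<or> (\<exists>x'. E x' D \<and> app x' z)"
  shows "is_set E (\<lambda>y. \<exists>x. E x D \<and> app x y)"
proof -
  obtain Tags where Tags: "\<And>u. E u Tags \<longleftrightarrow> (\<exists>x. E x D \<and> u = opair x T)"
    using exists_tagged_copy by blast
  define S where "S = union2 T Tags"
  define g where "g u = (if E u T then u else THE y. \<exists>x. u = opair x T \<and> app x y)" for u
  have g_T: "g u = u" if "E u T" for u
    using that by (simp add: g_def)
  have g_tag: "g (opair x T) = y" if "app x y" for x y
    using that opair_not_mem_itrans[OF T] app_functional by (auto simp: g_def)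
  have S: "E u S \<longleftrightarrow> E u T \<or> (\<exists>x y. E x D \<and> app x y \<and> \<not> E y T \<and> u = opair x T)" for u
    unfolding S_def union2_mem Tags using outside_T by blast
  have graph: "E u S \<and> w = g u \<longleftrightarrow>
      E u S \<and> ((E u T \<and> w = u) \<or> (\<exists>x. E x D \<and> iopair E u x T \<and> app x w))" for u w
    unfolding S iopair_iff using g_T g_tag opair_not_mem_itrans[OF T] app_functional by metis
  interpret image: inj_transitive_image E S g
  proof
    show "definable E (\<lambda>e. E (e 0) S \<and> e 1 = g (e 0))"
      unfolding graph iopair_def iupair_def by (intro definable_intros definable_app)
  next
    fix u v assume "E u S" "E v S" "g u = g v"
    then show "u = v"
      unfolding S using g_T g_tag inj by metis
  next
    fix u z assume "E u S" "E z (g u)"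
    then show "\<exists>v. E v S \<and> z = g v"
      unfolding S using g_T g_tag closed outside_T T unfolding itrans_def by metis
  qed
  obtain I where I: "\<And>z. E z I \<longleftrightarrow> (\<exists>u. E u S \<and> z = g u)"
    using image.image_is_set unfolding is_set_def by blast
  have "\<exists>R. \<forall>z. E z R \<longleftrightarrow> E z I \<and> (\<exists>x. E x D \<and> app x z)"
    by (rule separation) (intro definable_intros definable_app)
  moreover have "E z I" if "E x D" "app x z" for x z
    unfolding I S using that outside_T g_tag app_functional by metis
  ultimately show ?thesis unfolding is_set_def by blast
qed

lemma range_is_set:
  assumes D: "\<And>x. E x D \<longleftrightarrow> (\<exists>y. app x y)" and T: "itrans E T"
    and cover: "\<And>x y z. app x y \<Longrightarrow> E z y \<Longrightarrow> E z T \<or> cf_ran E \<phi> env z"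
  shows "is_set E (cf_ran E \<phi> env)"
proof -
  obtain D0 where D0: "\<And>x. E x D0 \<Longrightarrow> E x D"
    and rep: "\<And>x y. app x y \<Longrightarrow> \<exists>!x'. E x' D0 \<and> app x' y"
    using exists_transversal[OF D] by blast
  have "\<exists>D'. \<forall>x. E x D' \<longleftrightarrow> E x D0 \<and> (\<exists>y. app x y \<and> \<not> E y T)"
    by (rule separation) (intro definable_intros definable_app)
  then obtain D' where D': "\<And>x. E x D' \<longleftrightarrow> E x D0 \<and> (\<exists>y. app x y \<and> \<not> E y T)"
    by blast
  have rep': "\<exists>x'. E x' D' \<and> app x' y" if "app x y" "\<not> E y T" for x y
    using rep[OF that(1)] that D' by blast
  have "is_set E (\<lambda>y. \<exists>x. E x D' \<and> app x y)"
  proof (rule range_on_is_set[OF T])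
    show "\<exists>y. app x y \<and> \<not> E y T" if "E x D'" for x
      using that D' by blast
    show "x = x'" if "E x D'" "E x' D'" "app x y" "app x' y" for x x' y
      using that D' rep by blast
    show "E z T \<or> (\<exists>x'. E x' D' \<and> app x' z)" if "E x D'" "app x y" "E z y" for x y z
      using cover[OF that(2,3)] rep' unfolding cf_ran_def by blast
  qed
  then obtain R' where R': "\<And>y. E y R' \<longleftrightarrow> (\<exists>x. E x D' \<and> app x y)"
    unfolding is_set_def by blast
  have "\<exists>R. \<forall>z. E z R \<longleftrightarrow> E z (union2 T R') \<and> cf_ran E \<phi> env z"
    by (rule separation) (unfold cf_ran_def, intro definable_intros definable_app)
  moreover have "E z (union2 T R')" if "cf_ran E \<phi> env z" for z
    using that rep' R' unfolding cf_ran_def by auto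
  ultimately show ?thesis unfolding is_set_def by blast
qed

lemma class_fun_is_set:
  assumes "is_set E (cf_dom E \<phi> env)" "is_set E (cf_ran E \<phi> env)"
  shows "is_set E (cls E \<phi> env)"
proof -
  obtain D R where D: "\<And>x. E x D \<longleftrightarrow> cf_dom E \<phi> env x" and R: "\<And>y. E y R \<longleftrightarrow> cf_ran E \<phi> env y"
    using assms unfolding is_set_def by blast
  obtain P where P: "\<And>a b. E a (union2 D R) \<Longrightarrow> E b (union2 D R) \<Longrightarrow> E (opair a b) P"
    using exists_opair_superset by blast
  have "\<exists>F. \<forall>p. E p F \<longleftrightarrow> E p P \<and> cls E \<phi> env p"
    by (rule separation) (intro definable_intros)
  moreover have "E p P" if p: "cls E \<phi> env p" for p
  proof -
    obtain a b where "p = opair a b"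
      using class_fun p unfolding is_class_fun_def iopair_iff by blast
    then have "app a b" using p unfolding cf_app_def iopair_iff by blast
    then show ?thesis using P D R \<open>p = opair a b\<close> unfolding cf_dom_def cf_ran_def by auto
  qed
  ultimately show ?thesis unfolding is_set_def by blast
qed

end

theorem lemma9p5:
  fixes E :: "'m \<Rightarrow> 'm \<Rightarrow> bool" and \<phi> :: fm and env :: "nat \<Rightarrow> 'm"
  assumes model: "ZFTM E"
    and F_fun: "is_class_fun E \<phi> env"
    and D_set: "is_set E (cf_dom E \<phi> env)"
    and cases: "(\<forall>y z. cf_ran E \<phi> env y \<and> E z y \<longrightarrow> cf_ran E \<phi> env z)
              \<or> (\<exists>Y. \<forall>y. cf_ran E \<phi> env y \<longrightarrow> isubset E y Y)"
  shows "is_set E (cls E \<phi> env) \<and> is_set E (cf_ran E \<phi> env)"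
proof -
  interpret zftm_class_fun E \<phi> env
    using model F_fun by (intro zftm_class_fun.intro zftm.intro zftm_class_fun_axioms.intro)
  obtain D where D: "\<And>x. E x D \<longleftrightarrow> (\<exists>y. app x y)"
    using D_set unfolding is_set_def cf_dom_def by blast
  obtain T where "itrans E T" and "\<And>x y z. app x y \<Longrightarrow> E z y \<Longrightarrow> E z T \<or> cf_ran E \<phi> env z"
    using cases
  proof
    assume "\<forall>y z. cf_ran E \<phi> env y \<and> E z y \<longrightarrow> cf_ran E \<phi> env z"
    then show thesis using that[OF itrans_emp] unfolding cf_ran_def by blast
  next
    assume "\<exists>Y. \<forall>y. cf_ran E \<phi> env y \<longrightarrow> isubset E y Y"
    then obtain Y T where "\<And>y. cf_ran E \<phi> env y \<Longrightarrow> isubset E y Y" "isubset E Y T" "itrans E T"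
      using exists_itrans_superset by blast
    then show thesis using that unfolding cf_ran_def isubset_def by blast
  qed
  then have "is_set E (cf_ran E \<phi> env)" using range_is_set[OF D] by blast
  then show ?thesis using class_fun_is_set D_set by blast
qed

end
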